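(* Let $A$ be a non-negatively graded pseudo-compact dg algebra over a commutative ring $k$. Then any homotopy equivalence between two minimal twisted $A$-modules is an isomorphism.
   Context: A twisted $A$-module is a right dg $A$-module $M=V\otimes A$ (completed tensor product) with $V$ a free graded $k$-module and differential $D_M$ compatible with the module structure. The restriction of $D_M$ to $V\otimes 1$ decomposes as $d^0+d^1+d^2+\cdots$ with $d^n:V\to V\otimes A^n$. $M$ is minimal if $d^0=0$. A homotopy equivalence is a closed degree-0 module map admitting a closed degree-0 map in the other direction such that both composites are cohomologous to the identities in the dg Hom complexes. *)

theory Defs
  imports Main
begin

text \<open>A graded dg algebra A over k is modelled inside an ambient ring type 'a:
  comp A n is the homogeneous component A^n (the sum of the components is required
  to be direct), sm A is the k-action, dA A the differential, and opens A a basis of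
  open graded two-sided dg ideals (each given by its set of homogeneous elements).\<close>

record ('k, 'a) dga =
  comp  :: "int \<Rightarrow> 'a set"
  sm    :: "'k \<Rightarrow> 'a \<Rightarrow> 'a"
  dA    :: "'a \<Rightarrow> 'a"
  opens :: "'a set set"

definition sgn_pow :: "int \<Rightarrow> 'a::ring_1" where
  "sgn_pow n = (if even n then 1 else - 1)"

definition ksubmod :: "('k, 'a::ring_1, 'z) dga_scheme \<Rightarrow> 'a set \<Rightarrow> bool" where
  "ksubmod A S \<longleftrightarrow> 0 \<in> S \<and> (\<forall>x\<in>S. \<forall>y\<in>S. x + y \<in> S) \<and> (\<forall>c x. x \<in> S \<longrightarrow> sm A c x \<in> S)"

definition fin_length_quot :: "('k, 'a::ring_1, 'z) dga_scheme \<Rightarrow> 'a set \<Rightarrow> 'a set \<Rightarrow> bool" where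
  "fin_length_quot A L U \<longleftrightarrow> (\<exists>N::nat. \<forall>Ss::'a set list.
      (\<forall>i<length Ss. ksubmod A (Ss ! i) \<and> L \<subseteq> Ss ! i \<and> Ss ! i \<subseteq> U) \<and> sorted_wrt (\<subset>) Ss
      \<longrightarrow> length Ss \<le> N)"

definition is_dga :: "('k::comm_ring_1, 'a::ring_1, 'z) dga_scheme \<Rightarrow> bool" where
  "is_dga A \<longleftrightarrow>
     (\<forall>n. ksubmod A (comp A n)) \<and>
     (\<forall>S x. finite S \<longrightarrow> (\<forall>n\<in>S. x n \<in> comp A n) \<longrightarrow> sum x S = 0 \<longrightarrow> (\<forall>n\<in>S. x n = 0)) \<and>
     1 \<in> comp A 0 \<and>
     (\<forall>p q x y. x \<in> comp A p \<longrightarrow> y \<in> comp A q \<longrightarrow> x * y \<in> comp A (p + q)) \<and>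
     (\<forall>n x y c. x \<in> comp A n \<longrightarrow> y \<in> comp A n \<longrightarrow> sm A c (x + y) = sm A c x + sm A c y) \<and>
     (\<forall>n x c c'. x \<in> comp A n \<longrightarrow> sm A (c + c') x = sm A c x + sm A c' x) \<and>
     (\<forall>n x c c'. x \<in> comp A n \<longrightarrow> sm A (c * c') x = sm A c (sm A c' x)) \<and>
     (\<forall>n x. x \<in> comp A n \<longrightarrow> sm A 1 x = x) \<and>
     (\<forall>p q x y c. x \<in> comp A p \<longrightarrow> y \<in> comp A q \<longrightarrow>
         sm A c (x * y) = sm A c x * y \<and> sm A c (x * y) = x * sm A c y) \<and>
     (\<forall>n x. x \<in> comp A n \<longrightarrow> dA A x \<in> comp A (n + 1)) \<and>
     (\<forall>n x y. x \<in> comp A n \<longrightarrow> y \<in> comp A n \<longrightarrow> dA A (x + y) = dA A x + dA A y) \<and>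
     (\<forall>n x c. x \<in> comp A n \<longrightarrow> dA A (sm A c x) = sm A c (dA A x)) \<and>
     (\<forall>n x. x \<in> comp A n \<longrightarrow> dA A (dA A x) = 0) \<and>
     (\<forall>p q x y. x \<in> comp A p \<longrightarrow> y \<in> comp A q \<longrightarrow>
         dA A (x * y) = dA A x * y + sgn_pow p * (x * dA A y))"

definition nonneg_graded :: "('k, 'a::ring_1, 'z) dga_scheme \<Rightarrow> bool" where
  "nonneg_graded A \<longleftrightarrow> (\<forall>n<0. comp A n = {0})"

definition pseudo_compact :: "('k::comm_ring_1, 'a::ring_1, 'z) dga_scheme \<Rightarrow> bool" where
  "pseudo_compact A \<longleftrightarrow>
     opens A \<noteq> {} \<and>
     (\<forall>I\<in>opens A. \<forall>J\<in>opens A. \<exists>K\<in>opens A. K \<subseteq> I \<inter> J) \<and>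
     (\<forall>I\<in>opens A.
        I \<subseteq> (\<Union>n. comp A n) \<and>
        (\<forall>n. ksubmod A (I \<inter> comp A n)) \<and>
        (\<forall>p q x y. x \<in> I \<inter> comp A p \<longrightarrow> y \<in> comp A q \<longrightarrow> x * y \<in> I \<and> y * x \<in> I) \<and>
        (\<forall>n x. x \<in> I \<inter> comp A n \<longrightarrow> dA A x \<in> I) \<and>
        finite {n. \<not> comp A n \<subseteq> I} \<and>
        (\<forall>n. fin_length_quot A (I \<inter> comp A n) (comp A n))) \<and>
     (\<forall>n x. x \<in> comp A n \<longrightarrow> (\<forall>I\<in>opens A. x \<in> I) \<longrightarrow> x = 0) \<and>
     (\<forall>n c. (\<forall>I\<in>opens A. c I \<in> comp A n) \<longrightarrow>
            (\<forall>I\<in>opens A. \<forall>J\<in>opens A. I \<subseteq> J \<longrightarrow> c I - c J \<in> J) \<longrightarrow>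
            (\<exists>x\<in>comp A n. \<forall>I\<in>opens A. x - c I \<in> I))"

text \<open>V is the free graded k-module with basis basis M (basis element b in degree
  vdeg M b).  A homogeneous element of degree n of the completed tensor product
  V \<otimes>^ A = lim_I (V \<otimes> A/I) is a family (m_b) with m_b in A^(n - vdeg b) such that
  for each open ideal I almost all m_b lie in I.\<close>

record ('b, 'a) twmod =
  basis :: "'b set"
  vdeg  :: "'b \<Rightarrow> int"
  Dm    :: "('b \<Rightarrow> 'a) \<Rightarrow> ('b \<Rightarrow> 'a)"

definition tw_el :: "('k, 'a::ring_1, 'z) dga_scheme \<Rightarrow> ('b, 'a, 'y) twmod_scheme \<Rightarrow> int \<Rightarrow> ('b \<Rightarrow> 'a) \<Rightarrow> bool" where
  "tw_el A M n m \<longleftrightarrow>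
     (\<forall>b. b \<notin> basis M \<longrightarrow> m b = 0) \<and>
     (\<forall>b\<in>basis M. m b \<in> comp A (n - vdeg M b)) \<and>
     (\<forall>I\<in>opens A. finite {b\<in>basis M. m b \<notin> I})"

text \<open>Continuous k-linear maps of degree p (degreewise continuity for the linear
  topology with basis of open submodules V \<otimes>^ I).\<close>
definition cont_lin :: "('k, 'a::ring_1, 'z) dga_scheme \<Rightarrow> ('b, 'a, 'y) twmod_scheme \<Rightarrow>
    ('c, 'a, 'x) twmod_scheme \<Rightarrow> int \<Rightarrow> (('b \<Rightarrow> 'a) \<Rightarrow> ('c \<Rightarrow> 'a)) \<Rightarrow> bool" where
  "cont_lin A M N p f \<longleftrightarrow>
     (\<forall>n m. tw_el A M n m \<longrightarrow> tw_el A N (n + p) (f m)) \<and>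
     (\<forall>n m m'. tw_el A M n m \<longrightarrow> tw_el A M n m' \<longrightarrow> f (\<lambda>b. m b + m' b) = (\<lambda>x. f m x + f m' x)) \<and>
     (\<forall>n m c. tw_el A M n m \<longrightarrow> f (\<lambda>b. sm A c (m b)) = (\<lambda>x. sm A c (f m x))) \<and>
     (\<forall>n. \<forall>I\<in>opens A. \<exists>J\<in>opens A. \<forall>m. tw_el A M n m \<longrightarrow> (\<forall>b. m b \<in> J) \<longrightarrow> (\<forall>x. f m x \<in> I))"

definition mod_map :: "('k, 'a::ring_1, 'z) dga_scheme \<Rightarrow> ('b, 'a, 'y) twmod_scheme \<Rightarrow>
    ('c, 'a, 'x) twmod_scheme \<Rightarrow> int \<Rightarrow> (('b \<Rightarrow> 'a) \<Rightarrow> ('c \<Rightarrow> 'a)) \<Rightarrow> bool" where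
  "mod_map A M N p f \<longleftrightarrow> cont_lin A M N p f \<and>
     (\<forall>n q m a. tw_el A M n m \<longrightarrow> a \<in> comp A q \<longrightarrow> f (\<lambda>b. m b * a) = (\<lambda>x. f m x * a))"

definition is_twisted :: "('k, 'a::ring_1, 'z) dga_scheme \<Rightarrow> ('b, 'a, 'y) twmod_scheme \<Rightarrow> bool" where
  "is_twisted A M \<longleftrightarrow> cont_lin A M M 1 (Dm M) \<and>
     (\<forall>n q m a. tw_el A M n m \<longrightarrow> a \<in> comp A q \<longrightarrow>
        Dm M (\<lambda>b. m b * a) = (\<lambda>b. Dm M m b * a + sgn_pow n * (m b * dA A a))) \<and>
     (\<forall>n m. tw_el A M n m \<longrightarrow> Dm M (Dm M m) = (\<lambda>b. 0))"

definition basis_el :: "'b \<Rightarrow> ('b \<Rightarrow> 'a::ring_1)" where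
  "basis_el b = (\<lambda>b'. if b' = b then 1 else 0)"

text \<open>d^n : V \<rightarrow> V \<otimes> A^n, the part of D_M(b \<otimes> 1) with coefficients in A^n.\<close>
definition dcomp :: "('b, 'a::ring_1, 'y) twmod_scheme \<Rightarrow> int \<Rightarrow> 'b \<Rightarrow> ('b \<Rightarrow> 'a)" where
  "dcomp M n b = (\<lambda>b'. if vdeg M b' = vdeg M b + 1 - n then Dm M (basis_el b) b' else 0)"

definition minimal :: "('b, 'a::ring_1, 'y) twmod_scheme \<Rightarrow> bool" where
  "minimal M \<longleftrightarrow> (\<forall>b\<in>basis M. dcomp M 0 b = (\<lambda>_. 0))"

definition closed0 :: "('k, 'a::ring_1, 'z) dga_scheme \<Rightarrow> ('b, 'a, 'y) twmod_scheme \<Rightarrow>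
    ('c, 'a, 'x) twmod_scheme \<Rightarrow> (('b \<Rightarrow> 'a) \<Rightarrow> ('c \<Rightarrow> 'a)) \<Rightarrow> bool" where
  "closed0 A M N f \<longleftrightarrow> mod_map A M N 0 f \<and>
     (\<forall>n m. tw_el A M n m \<longrightarrow> Dm N (f m) = f (Dm M m))"

definition coh_id :: "('k, 'a::ring_1, 'z) dga_scheme \<Rightarrow> ('b, 'a, 'y) twmod_scheme \<Rightarrow>
    (('b \<Rightarrow> 'a) \<Rightarrow> ('b \<Rightarrow> 'a)) \<Rightarrow> bool" where
  "coh_id A M u \<longleftrightarrow> (\<exists>h. mod_map A M M (-1) h \<and>
     (\<forall>n m. tw_el A M n m \<longrightarrow> (\<lambda>b. u m b - m b) = (\<lambda>b. Dm M (h m) b + h (Dm M m) b)))"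

definition homotopy_equiv :: "('k, 'a::ring_1, 'z) dga_scheme \<Rightarrow> ('b, 'a, 'y) twmod_scheme \<Rightarrow>
    ('c, 'a, 'x) twmod_scheme \<Rightarrow> (('b \<Rightarrow> 'a) \<Rightarrow> ('c \<Rightarrow> 'a)) \<Rightarrow> bool" where
  "homotopy_equiv A M N f \<longleftrightarrow> closed0 A M N f \<and>
     (\<exists>g. closed0 A N M g \<and> coh_id A M (g \<circ> f) \<and> coh_id A N (f \<circ> g))"

definition is_iso :: "('k, 'a::ring_1, 'z) dga_scheme \<Rightarrow> ('b, 'a, 'y) twmod_scheme \<Rightarrow>
    ('c, 'a, 'x) twmod_scheme \<Rightarrow> (('b \<Rightarrow> 'a) \<Rightarrow> ('c \<Rightarrow> 'a)) \<Rightarrow> bool" where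
  "is_iso A M N f \<longleftrightarrow> closed0 A M N f \<and>
     (\<exists>g. closed0 A N M g \<and> (\<forall>n m. tw_el A M n m \<longrightarrow> g (f m) = m) \<and>
                           (\<forall>n m. tw_el A N n m \<longrightarrow> f (g m) = m))"

end

theory Submission
  imports Defs
begin

(* Filter a twisted module by the degree of its coefficients: F^p consists of the families
   all of whose coefficients lie in A^i with i >= p.  Since A is non-negatively graded, module
   maps preserve this filtration, and since M is minimal (d^0 = 0), D_M raises it by one.  Hence
   if u = g f is homotopic to the identity, w = u - id = D h + h D raises the filtration, so the
   Neumann series of u = id + w stabilises in every coefficient; its limit is a closed inverse of
   u.  The same holds for f g, so f has a left and a right inverse. *)

text \<open>For m of degree n the coefficient m b has degree n - vdeg M b, so in_filt M p n m
  says that m lies in F^p.\<close>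
definition in_filt :: "('b, 'a::ring_1, 'y) twmod_scheme \<Rightarrow> int \<Rightarrow> int \<Rightarrow> ('b \<Rightarrow> 'a) \<Rightarrow> bool" where
  "in_filt M p n m \<longleftrightarrow> (\<forall>b. n - vdeg M b < p \<longrightarrow> m b = 0)"

lemma sum_basis_el_mult:
  "finite S \<Longrightarrow> (\<Sum>b\<in>S. basis_el b b' * (m b :: 'a::ring_1)) = (if b' \<in> S then m b' else 0)"
proof -
  assume S: "finite S"
  have "(\<Sum>b\<in>S. basis_el b b' * m b) = (\<Sum>b\<in>S. if b' = b then m b else 0)"
    unfolding basis_el_def by (rule sum.cong) auto
  then show ?thesis
    using sum.delta'[OF S, of b' m] by simp
qed

locale nonneg_pc_dga =
  fixes A :: "('k::comm_ring_1, 'a::ring_1) dga"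
  assumes dga: "is_dga A" and nonneg: "nonneg_graded A" and pc: "pseudo_compact A"
begin

lemma comp_ksubmod: "ksubmod A (comp A n)"
  using dga unfolding is_dga_def by (elim conjE) simp

lemma zero_in_comp [simp]: "0 \<in> comp A n"
  using comp_ksubmod unfolding ksubmod_def by blast

lemma comp_add: "x \<in> comp A n \<Longrightarrow> y \<in> comp A n \<Longrightarrow> x + y \<in> comp A n"
  using comp_ksubmod unfolding ksubmod_def by blast

lemma comp_sm: "x \<in> comp A n \<Longrightarrow> sm A c x \<in> comp A n"
  using comp_ksubmod unfolding ksubmod_def by blast

lemma one_in_comp0: "1 \<in> comp A 0"
  using dga unfolding is_dga_def by (elim conjE) simp

lemma comp_mult: "x \<in> comp A p \<Longrightarrow> y \<in> comp A q \<Longrightarrow> x * y \<in> comp A (p + q)"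
  using dga unfolding is_dga_def by (elim conjE) simp

lemma comp_neg_degree: "n < 0 \<Longrightarrow> x \<in> comp A n \<Longrightarrow> x = 0"
  using nonneg unfolding nonneg_graded_def by blast

lemma sm_add_left: "x \<in> comp A n \<Longrightarrow> sm A (c + c') x = sm A c x + sm A c' x"
  using dga unfolding is_dga_def by (elim conjE) simp

lemma sm_add_right: "x \<in> comp A n \<Longrightarrow> y \<in> comp A n \<Longrightarrow> sm A c (x + y) = sm A c x + sm A c y"
  using dga unfolding is_dga_def by (elim conjE) simp

lemma sm_one: "x \<in> comp A n \<Longrightarrow> sm A 1 x = x"
  using dga unfolding is_dga_def by (elim conjE) simp

lemma sm_zero_right [simp]: "sm A c 0 = 0"
proof -
  have "sm A c (0 + 0) = sm A c 0 + sm A c 0"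
    by (rule sm_add_right) simp_all
  then show ?thesis by simp
qed

lemma sm_minus_one: "x \<in> comp A n \<Longrightarrow> sm A (-1) x = - x"
proof -
  assume x: "x \<in> comp A n"
  have "sm A 0 x = 0"
    using sm_add_left[OF x, of 0 0] by simp
  then have "x + sm A (-1) x = 0"
    using sm_add_left[OF x, of 1 "-1"] sm_one[OF x] by simp
  then show ?thesis
    by (simp add: add_eq_0_iff)
qed

lemma comp_uminus: "x \<in> comp A n \<Longrightarrow> - x \<in> comp A n"
  using sm_minus_one comp_sm by metis

lemma comp_diff: "x \<in> comp A n \<Longrightarrow> y \<in> comp A n \<Longrightarrow> x - y \<in> comp A n"
  using comp_add comp_uminus by (metis diff_conv_add_uminus)

lemma sm_diff_right:
  assumes x: "x \<in> comp A n" and y: "y \<in> comp A n"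
  shows "sm A c (x - y) = sm A c x - sm A c y"
proof -
  have "sm A c ((x - y) + y) = sm A c (x - y) + sm A c y"
    by (rule sm_add_right[OF comp_diff[OF x y] y])
  then show ?thesis by (simp add: algebra_simps)
qed

lemma open_ksubmod: "I \<in> opens A \<Longrightarrow> ksubmod A (I \<inter> comp A n)"
  using pc unfolding pseudo_compact_def by (elim conjE) simp

lemma open_zero: "I \<in> opens A \<Longrightarrow> 0 \<in> I"
  using open_ksubmod[of I 0] unfolding ksubmod_def by blast

lemma open_add:
  "I \<in> opens A \<Longrightarrow> x \<in> I \<Longrightarrow> y \<in> I \<Longrightarrow> x \<in> comp A n \<Longrightarrow> y \<in> comp A n \<Longrightarrow> x + y \<in> I"
  using open_ksubmod[of I n] unfolding ksubmod_def by blast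

lemma open_sm: "I \<in> opens A \<Longrightarrow> x \<in> I \<Longrightarrow> x \<in> comp A n \<Longrightarrow> sm A c x \<in> I"
  using open_ksubmod[of I n] unfolding ksubmod_def by blast

lemma open_uminus: "I \<in> opens A \<Longrightarrow> x \<in> I \<Longrightarrow> x \<in> comp A n \<Longrightarrow> - x \<in> I"
  using open_sm sm_minus_one by metis

lemma open_diff:
  "I \<in> opens A \<Longrightarrow> x \<in> I \<Longrightarrow> y \<in> I \<Longrightarrow> x \<in> comp A n \<Longrightarrow> y \<in> comp A n \<Longrightarrow> x - y \<in> I"
  using open_add open_uminus comp_uminus by (metis diff_conv_add_uminus)

lemma open_mult_right: "I \<in> opens A \<Longrightarrow> x \<in> I \<Longrightarrow> x \<in> comp A p \<Longrightarrow> y \<in> comp A q \<Longrightarrow> x * y \<in> I"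
  using pc unfolding pseudo_compact_def by (elim conjE) simp

lemma opens_directed: "I \<in> opens A \<Longrightarrow> J \<in> opens A \<Longrightarrow> \<exists>K\<in>opens A. K \<subseteq> I \<and> K \<subseteq> J"
  using pc unfolding pseudo_compact_def by (elim conjE) simp

lemma open_contains_high_comps: "I \<in> opens A \<Longrightarrow> \<exists>N::nat. \<forall>j \<ge> int N. comp A j \<subseteq> I"
proof -
  assume I: "I \<in> opens A"
  then have "finite {n. \<not> comp A n \<subseteq> I}"
    using pc unfolding pseudo_compact_def by (elim conjE) simp
  then obtain B where B: "\<And>j. \<not> comp A j \<subseteq> I \<Longrightarrow> j \<le> B"
    by (meson bdd_above_finite bdd_above_def mem_Collect_eq)
  have "comp A j \<subseteq> I" if "int (nat (B + 1)) \<le> j" for j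
    using B[of j] that by linarith
  then show ?thesis by blast
qed

lemma comp_separated: "x \<in> comp A n \<Longrightarrow> \<forall>I\<in>opens A. x \<in> I \<Longrightarrow> x = 0"
  using pc unfolding pseudo_compact_def by (elim conjE) simp

lemma tw_el_outside: "tw_el A M n m \<Longrightarrow> b \<notin> basis M \<Longrightarrow> m b = 0"
  unfolding tw_el_def by blast

lemma tw_el_comp: "tw_el A M n m \<Longrightarrow> m b \<in> comp A (n - vdeg M b)"
  unfolding tw_el_def by (cases "b \<in> basis M") auto

lemma tw_el_finite: "tw_el A M n m \<Longrightarrow> I \<in> opens A \<Longrightarrow> finite {b\<in>basis M. m b \<notin> I}"
  unfolding tw_el_def by blast

lemma tw_elI:
  assumes "\<And>b. b \<notin> basis M \<Longrightarrow> m b = 0" and "\<And>b. m b \<in> comp A (n - vdeg M b)"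
    and "\<And>I. I \<in> opens A \<Longrightarrow> finite {b\<in>basis M. m b \<notin> I}"
  shows "tw_el A M n m"
  using assms unfolding tw_el_def by blast

lemma tw_el_map:
  assumes m: "tw_el A M n m"
    and comp: "\<And>b. m' b \<in> comp A (n' - vdeg M b)"
    and zero: "\<And>b. m b = 0 \<Longrightarrow> m' b = 0"
    and small: "\<And>I b. I \<in> opens A \<Longrightarrow> m b \<in> I \<Longrightarrow> m' b \<in> I"
  shows "tw_el A M n' m'"
proof (rule tw_elI[OF _ comp])
  fix I assume I: "I \<in> opens A"
  show "finite {b\<in>basis M. m' b \<notin> I}"
    by (rule finite_subset[OF _ tw_el_finite[OF m I]]) (use small[OF I] in blast)
qed (use zero tw_el_outside[OF m] in blast)

lemma tw_el_zero: "tw_el A M n (\<lambda>b. 0)"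
  by (rule tw_elI) (auto simp: open_zero)

lemma tw_el_add: "tw_el A M n m \<Longrightarrow> tw_el A M n m' \<Longrightarrow> tw_el A M n (\<lambda>b. m b + m' b)"
proof (rule tw_elI)
  fix I assume m: "tw_el A M n m" and m': "tw_el A M n m'" and I: "I \<in> opens A"
  show "finite {b\<in>basis M. m b + m' b \<notin> I}"
    by (rule finite_subset[OF _ finite_UnI[OF tw_el_finite[OF m I] tw_el_finite[OF m' I]]])
      (use open_add[OF I _ _ tw_el_comp[OF m] tw_el_comp[OF m']] in blast)
qed (auto simp: tw_el_outside tw_el_comp comp_add)

lemma tw_el_uminus:
  assumes m: "tw_el A M n m"
  shows "tw_el A M n (\<lambda>b. - m b)"
  by (rule tw_el_map[OF m]) (auto intro: comp_uminus open_uminus tw_el_comp[OF m])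

lemma tw_el_diff: "tw_el A M n m \<Longrightarrow> tw_el A M n m' \<Longrightarrow> tw_el A M n (\<lambda>b. m b - m' b)"
  using tw_el_add[of M n m "\<lambda>b. - m' b"] tw_el_uminus[of M n m'] by simp

lemma tw_el_sm:
  assumes m: "tw_el A M n m"
  shows "tw_el A M n (\<lambda>b. sm A c (m b))"
  by (rule tw_el_map[OF m]) (auto intro: comp_sm open_sm tw_el_comp[OF m])

lemma tw_el_mult:
  assumes m: "tw_el A M n m" and a: "a \<in> comp A q"
  shows "tw_el A M (n + q) (\<lambda>b. m b * a)"
proof (rule tw_el_map[OF m])
  show "m b * a \<in> comp A (n + q - vdeg M b)" for b
    using comp_mult[OF tw_el_comp[OF m, of b] a] by (simp add: algebra_simps)
qed (auto intro: open_mult_right[OF _ _ tw_el_comp[OF m] a])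

lemma tw_el_basis_el: "b \<in> basis M \<Longrightarrow> tw_el A M (vdeg M b) (basis_el b)"
proof (rule tw_elI)
  fix I assume I: "I \<in> opens A"
  show "finite {b'\<in>basis M. basis_el b b' \<notin> I}"
    by (rule finite_subset[of _ "{b}"]) (auto simp: basis_el_def open_zero[OF I])
qed (auto simp: basis_el_def one_in_comp0)

lemma tw_el_monomial: "b \<in> basis M \<Longrightarrow> a \<in> comp A j \<Longrightarrow> tw_el A M (vdeg M b + j) (\<lambda>b'. basis_el b b' * a)"
  by (rule tw_el_mult[OF tw_el_basis_el])

lemma tw_el_sum: "finite S \<Longrightarrow> \<forall>i\<in>S. tw_el A M n (g i) \<Longrightarrow> tw_el A M n (\<lambda>b. \<Sum>i\<in>S. g i b)"
  by (induction S rule: finite_induct) (auto intro: tw_el_zero tw_el_add)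

lemma tw_el_split:
  assumes m: "tw_el A M n m" and J: "J \<in> opens A"
  obtains S t where "finite S" "S \<subseteq> basis M" "tw_el A M n t" "\<forall>b. t b \<in> J"
    "m = (\<lambda>b'. (\<Sum>b\<in>S. basis_el b b' * m b) + t b')"
proof
  let ?S = "{b\<in>basis M. m b \<notin> J}"
  let ?t = "\<lambda>b. if b \<in> ?S then 0 else m b"
  show "finite ?S" by (rule tw_el_finite[OF m J])
  show "?S \<subseteq> basis M" by blast
  show "tw_el A M n ?t"
    by (rule tw_el_map[OF m]) (auto simp: tw_el_comp[OF m] open_zero)
  show "\<forall>b. ?t b \<in> J"
    using tw_el_outside[OF m] open_zero[OF J] by auto
  show "m = (\<lambda>b'. (\<Sum>b\<in>?S. basis_el b b' * m b) + ?t b')"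
    by (rule ext) (simp add: sum_basis_el_mult[OF \<open>finite ?S\<close>])
qed

lemma cont_lin_tw_el: "cont_lin A M N p f \<Longrightarrow> tw_el A M n m \<Longrightarrow> tw_el A N (n + p) (f m)"
  unfolding cont_lin_def by blast

lemma cont_lin_add:
  "cont_lin A M N p f \<Longrightarrow> tw_el A M n m \<Longrightarrow> tw_el A M n m' \<Longrightarrow> f (\<lambda>b. m b + m' b) = (\<lambda>x. f m x + f m' x)"
  unfolding cont_lin_def by blast

lemma cont_lin_sm: "cont_lin A M N p f \<Longrightarrow> tw_el A M n m \<Longrightarrow> f (\<lambda>b. sm A c (m b)) = (\<lambda>x. sm A c (f m x))"
  unfolding cont_lin_def by blast

lemma cont_lin_cont:
  "cont_lin A M N p f \<Longrightarrow> I \<in> opens A \<Longrightarrow>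
     \<exists>J\<in>opens A. \<forall>m. tw_el A M n m \<longrightarrow> (\<forall>b. m b \<in> J) \<longrightarrow> (\<forall>x. f m x \<in> I)"
  unfolding cont_lin_def by blast

lemma cont_lin_zero:
  assumes f: "cont_lin A M N p f"
  shows "f (\<lambda>b. 0) = (\<lambda>x. 0)"
proof
  fix x
  have "f (\<lambda>b. 0 + 0) = (\<lambda>x. f (\<lambda>b. 0) x + f (\<lambda>b. 0) x)"
    by (rule cont_lin_add[OF f tw_el_zero tw_el_zero])
  then have "f (\<lambda>b. 0) x = f (\<lambda>b. 0) x + f (\<lambda>b. 0) x"
    by (metis add_0)
  then show "f (\<lambda>b. 0) x = 0"
    by (metis add_cancel_left_right)
qed

lemma cont_lin_uminus:
  assumes f: "cont_lin A M N p f" and m: "tw_el A M n m"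
  shows "f (\<lambda>b. - m b) = (\<lambda>x. - f m x)"
proof -
  have "(\<lambda>b. - m b) = (\<lambda>b. sm A (-1) (m b))"
    using sm_minus_one[OF tw_el_comp[OF m]] by simp
  then have "f (\<lambda>b. - m b) = (\<lambda>x. sm A (-1) (f m x))"
    using cont_lin_sm[OF f m] by simp
  then show ?thesis
    using sm_minus_one[OF tw_el_comp[OF cont_lin_tw_el[OF f m]]] by simp
qed

lemma cont_lin_diff:
  "cont_lin A M N p f \<Longrightarrow> tw_el A M n m \<Longrightarrow> tw_el A M n m' \<Longrightarrow> f (\<lambda>b. m b - m' b) = (\<lambda>x. f m x - f m' x)"
  using cont_lin_add[of M N p f n m "\<lambda>b. - m' b"] cont_lin_uminus[of M N p f n m'] tw_el_uminus[of M n m']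
  by simp

lemma cont_lin_sum:
  assumes f: "cont_lin A M N p f" and S: "finite S" and g: "\<forall>i\<in>S. tw_el A M n (g i)"
  shows "f (\<lambda>b. \<Sum>i\<in>S. g i b) = (\<lambda>x. \<Sum>i\<in>S. f (g i) x)"
  using S g
proof (induction S rule: finite_induct)
  case empty
  then show ?case using cont_lin_zero[OF f] by simp
next
  case (insert i S)
  then show ?case
    using cont_lin_add[OF f, of n "g i" "\<lambda>b. \<Sum>i\<in>S. g i b"] tw_el_sum[OF insert(1), of M n g] by simp
qed

lemma cont_lin_comp:
  assumes f: "cont_lin A M N p f" and g: "cont_lin A N P q g"
  shows "cont_lin A M P (p + q) (g \<circ> f)"
  unfolding cont_lin_def
proof (intro conjI allI impI ballI)
  fix n m assume m: "tw_el A M n m"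
  show "tw_el A P (n + (p + q)) ((g \<circ> f) m)"
    using cont_lin_tw_el[OF g cont_lin_tw_el[OF f m]] by (simp add: add.assoc)
  fix m' assume m': "tw_el A M n m'"
  show "(g \<circ> f) (\<lambda>b. m b + m' b) = (\<lambda>x. (g \<circ> f) m x + (g \<circ> f) m' x)"
    using cont_lin_add[OF f m m'] cont_lin_add[OF g cont_lin_tw_el[OF f m] cont_lin_tw_el[OF f m']] by simp
next
  fix n m c assume m: "tw_el A M n m"
  show "(g \<circ> f) (\<lambda>b. sm A c (m b)) = (\<lambda>x. sm A c ((g \<circ> f) m x))"
    using cont_lin_sm[OF f m] cont_lin_sm[OF g cont_lin_tw_el[OF f m]] by simp
next
  fix n I assume I: "I \<in> opens A"
  obtain J where "J \<in> opens A" and "\<forall>m. tw_el A N (n + p) m \<longrightarrow> (\<forall>b. m b \<in> J) \<longrightarrow> (\<forall>x. g m x \<in> I)"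
    using cont_lin_cont[OF g I] by blast
  moreover obtain K where "K \<in> opens A" and "\<forall>m. tw_el A M n m \<longrightarrow> (\<forall>b. m b \<in> K) \<longrightarrow> (\<forall>x. f m x \<in> J)"
    using cont_lin_cont[OF f \<open>J \<in> opens A\<close>] by blast
  ultimately show "\<exists>K\<in>opens A. \<forall>m. tw_el A M n m \<longrightarrow> (\<forall>b. m b \<in> K) \<longrightarrow> (\<forall>x. (g \<circ> f) m x \<in> I)"
    using cont_lin_tw_el[OF f] by (metis comp_apply)
qed

lemma mod_map_cont_lin: "mod_map A M N p f \<Longrightarrow> cont_lin A M N p f"
  unfolding mod_map_def by blast

lemma mod_map_mult: "mod_map A M N p f \<Longrightarrow> tw_el A M n m \<Longrightarrow> a \<in> comp A q \<Longrightarrow> f (\<lambda>b. m b * a) = (\<lambda>x. f m x * a)"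
  unfolding mod_map_def by blast

lemma closed0_mod_map: "closed0 A M N f \<Longrightarrow> mod_map A M N 0 f"
  unfolding closed0_def by blast

lemma closed0_cont_lin: "closed0 A M N f \<Longrightarrow> cont_lin A M N 0 f"
  by (rule mod_map_cont_lin[OF closed0_mod_map])

lemma closed0_tw_el: "closed0 A M N f \<Longrightarrow> tw_el A M n m \<Longrightarrow> tw_el A N n (f m)"
  using cont_lin_tw_el[OF closed0_cont_lin] by fastforce

lemma closed0_Dm: "closed0 A M N f \<Longrightarrow> tw_el A M n m \<Longrightarrow> Dm N (f m) = f (Dm M m)"
  unfolding closed0_def by blast

lemma twisted_Dm_cont_lin: "is_twisted A M \<Longrightarrow> cont_lin A M M 1 (Dm M)"
  unfolding is_twisted_def by blast

lemma twisted_Dm_leibniz: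
  "is_twisted A M \<Longrightarrow> tw_el A M n m \<Longrightarrow> a \<in> comp A q \<Longrightarrow>
     Dm M (\<lambda>b. m b * a) = (\<lambda>b. Dm M m b * a + sgn_pow n * (m b * dA A a))"
  unfolding is_twisted_def by blast

lemma closed0_id: "closed0 A M M (\<lambda>m. m)"
  unfolding closed0_def mod_map_def cont_lin_def by auto

lemma closed0_comp:
  assumes f: "closed0 A M N f" and g: "closed0 A N P g"
  shows "closed0 A M P (g \<circ> f)"
  unfolding closed0_def mod_map_def
proof (intro conjI allI impI)
  show "cont_lin A M P 0 (g \<circ> f)"
    using cont_lin_comp[OF closed0_cont_lin[OF f] closed0_cont_lin[OF g]] by simp
  fix n m assume m: "tw_el A M n m"
  show "Dm P ((g \<circ> f) m) = (g \<circ> f) (Dm M m)"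
    using closed0_Dm[OF g closed0_tw_el[OF f m]] closed0_Dm[OF f m] by simp
  fix q a assume a: "a \<in> comp A q"
  show "(g \<circ> f) (\<lambda>b. m b * a) = (\<lambda>x. (g \<circ> f) m x * a)"
    using mod_map_mult[OF closed0_mod_map[OF f] m a]
      mod_map_mult[OF closed0_mod_map[OF g] closed0_tw_el[OF f m] a] by simp
qed

lemma closed0_diff:
  assumes N: "is_twisted A N" and f: "closed0 A M N f" and g: "closed0 A M N g"
  shows "closed0 A M N (\<lambda>m b. f m b - g m b)"
  unfolding closed0_def mod_map_def cont_lin_def
proof (intro conjI allI impI ballI)
  fix n m assume m: "tw_el A M n m"
  show "tw_el A N (n + 0) (\<lambda>b. f m b - g m b)"
    using tw_el_diff[OF closed0_tw_el[OF f m] closed0_tw_el[OF g m]] by simp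
  show "Dm N (\<lambda>b. f m b - g m b) = (\<lambda>b. f (Dm M m) b - g (Dm M m) b)"
    using cont_lin_diff[OF twisted_Dm_cont_lin[OF N] closed0_tw_el[OF f m] closed0_tw_el[OF g m]]
      closed0_Dm[OF f m] closed0_Dm[OF g m] by simp
  fix c
  show "(\<lambda>b. f (\<lambda>b. sm A c (m b)) b - g (\<lambda>b. sm A c (m b)) b) = (\<lambda>x. sm A c (f m x - g m x))"
    using cont_lin_sm[OF closed0_cont_lin[OF f] m] cont_lin_sm[OF closed0_cont_lin[OF g] m]
      sm_diff_right[OF tw_el_comp[OF closed0_tw_el[OF f m]] tw_el_comp[OF closed0_tw_el[OF g m]]]
    by simp
next
  fix n m m' assume m: "tw_el A M n m" and m': "tw_el A M n m'"
  show "(\<lambda>b. f (\<lambda>b. m b + m' b) b - g (\<lambda>b. m b + m' b) b) = (\<lambda>x. (f m x - g m x) + (f m' x - g m' x))"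
    using cont_lin_add[OF closed0_cont_lin[OF f] m m'] cont_lin_add[OF closed0_cont_lin[OF g] m m']
    by (simp add: algebra_simps)
next
  fix n q m a assume m: "tw_el A M n m" and a: "a \<in> comp A q"
  show "(\<lambda>b. f (\<lambda>b. m b * a) b - g (\<lambda>b. m b * a) b) = (\<lambda>x. (f m x - g m x) * a)"
    using mod_map_mult[OF closed0_mod_map[OF f] m a] mod_map_mult[OF closed0_mod_map[OF g] m a]
    by (simp add: algebra_simps)
next
  fix n I assume I: "I \<in> opens A"
  obtain J1 where J1: "J1 \<in> opens A" "\<forall>m. tw_el A M n m \<longrightarrow> (\<forall>b. m b \<in> J1) \<longrightarrow> (\<forall>x. f m x \<in> I)"
    using cont_lin_cont[OF closed0_cont_lin[OF f] I] by blast
  obtain J2 where J2: "J2 \<in> opens A" "\<forall>m. tw_el A M n m \<longrightarrow> (\<forall>b. m b \<in> J2) \<longrightarrow> (\<forall>x. g m x \<in> I)"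
    using cont_lin_cont[OF closed0_cont_lin[OF g] I] by blast
  obtain K where K: "K \<in> opens A" "K \<subseteq> J1" "K \<subseteq> J2"
    using opens_directed[OF J1(1) J2(1)] by blast
  have "\<forall>m. tw_el A M n m \<longrightarrow> (\<forall>b. m b \<in> K) \<longrightarrow> (\<forall>x. f m x - g m x \<in> I)"
    using J1(2) J2(2) K(2,3) open_diff[OF I] tw_el_comp closed0_tw_el[OF f] closed0_tw_el[OF g]
    by (meson subsetD)
  then show "\<exists>J\<in>opens A. \<forall>m. tw_el A M n m \<longrightarrow> (\<forall>b. m b \<in> J) \<longrightarrow> (\<forall>x. f m x - g m x \<in> I)"
    using K(1) by blast
qed

lemma closed0_zero: "is_twisted A N \<Longrightarrow> closed0 A M N (\<lambda>m b. 0)"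
  unfolding closed0_def mod_map_def cont_lin_def
  using cont_lin_zero[OF twisted_Dm_cont_lin] by (auto simp: tw_el_zero open_zero)

lemma tw_el_in_filt_0: "tw_el A M n m \<Longrightarrow> in_filt M 0 n m"
  unfolding in_filt_def by (metis comp_neg_degree tw_el_comp)

text \<open>By continuity of f and the finiteness in tw_el, f m agrees with the image of finitely many
  monomials modulo any open ideal; as the open ideals separate points of A, the coefficients of
  f m in low degrees vanish.\<close>
lemma cont_lin_in_filt_of_monomials:
  assumes f: "cont_lin A M N q f" and m: "tw_el A M n m" and m_filt: "in_filt M p n m"
    and monomials: "\<And>b j a. b \<in> basis M \<Longrightarrow> p \<le> j \<Longrightarrow> a \<in> comp A j \<Longrightarrow>
      in_filt N (p + s) (vdeg M b + j + q) (f (\<lambda>b'. basis_el b b' * a))"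
  shows "in_filt N (p + s) (n + q) (f m)"
  unfolding in_filt_def
proof (intro allI impI)
  fix c assume c: "n + q - vdeg N c < p + s"
  have "f m c \<in> I" if I: "I \<in> opens A" for I
  proof -
    obtain J where J: "J \<in> opens A" and small: "\<forall>t. tw_el A M n t \<longrightarrow> (\<forall>b. t b \<in> J) \<longrightarrow> (\<forall>x. f t x \<in> I)"
      using cont_lin_cont[OF f I] by blast
    obtain S t where S: "finite S" "S \<subseteq> basis M" and t: "tw_el A M n t" "\<forall>b. t b \<in> J"
      and split: "m = (\<lambda>b'. (\<Sum>b\<in>S. basis_el b b' * m b) + t b')"
      using tw_el_split[OF m J] by blast
    let ?mono = "\<lambda>b b'. basis_el b b' * m b"
    have mono: "\<forall>b\<in>S. tw_el A M n (?mono b)"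
    proof
      fix b assume "b \<in> S"
      then have "b \<in> basis M" using S(2) by blast
      then have "tw_el A M (vdeg M b + (n - vdeg M b)) (?mono b)"
        by (rule tw_el_monomial[OF _ tw_el_comp[OF m]])
      then show "tw_el A M n (?mono b)" by simp
    qed
    have "f m = (\<lambda>x. (\<Sum>b\<in>S. f (?mono b) x) + f t x)"
      using arg_cong[of _ _ f, OF split] cont_lin_add[OF f tw_el_sum[OF S(1) mono] t(1)]
        cont_lin_sum[OF f S(1) mono] by simp
    moreover have "f (?mono b) c = 0" if b: "b \<in> S" for b
    proof (cases "n - vdeg M b < p")
      case True
      then show ?thesis
        using m_filt cont_lin_zero[OF f] unfolding in_filt_def by simp
    next
      case False
      have "in_filt N (p + s) (vdeg M b + (n - vdeg M b) + q) (f (?mono b))"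
        by (rule monomials[OF _ _ tw_el_comp[OF m]]) (use b S(2) False in auto)
      then show ?thesis
        using c unfolding in_filt_def by simp
    qed
    ultimately show "f m c \<in> I"
      using small t by simp
  qed
  then show "f m c = 0"
    using comp_separated[OF tw_el_comp[OF cont_lin_tw_el[OF f m]]] by blast
qed

lemma mod_map_in_filt:
  assumes f: "mod_map A M N q f" and m: "tw_el A M n m" and m_filt: "in_filt M p n m"
  shows "in_filt N p (n + q) (f m)"
proof -
  have "in_filt N (p + 0) (n + q) (f m)"
  proof (rule cont_lin_in_filt_of_monomials[OF mod_map_cont_lin[OF f] m m_filt])
    fix b j a assume b: "b \<in> basis M" and j: "p \<le> j" and a: "a \<in> comp A j"
    have "f (basis_el b) c = 0" if "vdeg M b + q - vdeg N c < 0" for c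
      using that comp_neg_degree tw_el_comp[OF cont_lin_tw_el[OF mod_map_cont_lin[OF f] tw_el_basis_el[OF b]]]
      by blast
    then show "in_filt N (p + 0) (vdeg M b + j + q) (f (\<lambda>b'. basis_el b b' * a))"
      using mod_map_mult[OF f tw_el_basis_el[OF b] a] j unfolding in_filt_def by force
  qed
  then show ?thesis by simp
qed

text \<open>This is where minimality enters: d^0 = 0 means that D_M raises the filtration.\<close>
lemma minimal_Dm_in_filt:
  assumes M: "is_twisted A M" and min: "minimal M" and m: "tw_el A M n m" and m_filt: "in_filt M p n m"
  shows "in_filt M (p + 1) (n + 1) (Dm M m)"
proof (rule cont_lin_in_filt_of_monomials[OF twisted_Dm_cont_lin[OF M] m m_filt])
  fix b j a assume b: "b \<in> basis M" and j: "p \<le> j" and a: "a \<in> comp A j"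
  have "Dm M (basis_el b) c = 0" if c: "vdeg M b + 1 - vdeg M c < 1" for c
  proof (cases "vdeg M b + 1 - vdeg M c < 0")
    case True
    then show ?thesis
      using comp_neg_degree tw_el_comp[OF cont_lin_tw_el[OF twisted_Dm_cont_lin[OF M] tw_el_basis_el[OF b]]]
      by blast
  next
    case False
    then have "vdeg M c = vdeg M b + 1 - 0" using c by linarith
    moreover have "dcomp M 0 b c = 0" using min b unfolding minimal_def by simp
    ultimately show ?thesis unfolding dcomp_def by simp
  qed
  then show "in_filt M (p + 1) (vdeg M b + j + 1) (Dm M (\<lambda>b'. basis_el b b' * a))"
    using twisted_Dm_leibniz[OF M tw_el_basis_el[OF b] a] j unfolding in_filt_def
    by (auto simp: basis_el_def)
qed

end

locale cohomologous_to_id = nonneg_pc_dga A for A :: "('k::comm_ring_1, 'a::ring_1) dga" +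
  fixes M :: "('b, 'a) twmod" and u :: "('b \<Rightarrow> 'a) \<Rightarrow> ('b \<Rightarrow> 'a)"
  assumes twisted: "is_twisted A M" and minimal: "minimal M"
    and closed: "closed0 A M M u" and coh_id: "coh_id A M u"
begin

definition w :: "('b \<Rightarrow> 'a) \<Rightarrow> ('b \<Rightarrow> 'a)" where
  "w m = (\<lambda>b. u m b - m b)"

lemma closed0_w: "closed0 A M M w"
  unfolding w_def[abs_def] by (rule closed0_diff[OF twisted closed closed0_id])

lemma w_diff: "tw_el A M n x \<Longrightarrow> tw_el A M n y \<Longrightarrow> w (\<lambda>b. x b - y b) = (\<lambda>b. w x b - w y b)"
  by (rule cont_lin_diff[OF closed0_cont_lin[OF closed0_w]])

lemma w_u: "tw_el A M n x \<Longrightarrow> w (u x) = u (w x)"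
  unfolding w_def using cont_lin_diff[OF closed0_cont_lin[OF closed] closed0_tw_el[OF closed]] by simp

lemma w_in_filt:
  assumes x: "tw_el A M n x" and x_filt: "in_filt M p n x"
  shows "in_filt M (p + 1) n (w x)"
proof -
  obtain h where h: "mod_map A M M (-1) h"
    and homotopy: "\<And>n m. tw_el A M n m \<Longrightarrow> w m = (\<lambda>b. Dm M (h m) b + h (Dm M m) b)"
    using coh_id unfolding coh_id_def w_def by blast
  have hx: "tw_el A M (n + -1) (h x)"
    using cont_lin_tw_el[OF mod_map_cont_lin[OF h] x] .
  have "in_filt M (p + 1) (n + -1 + 1) (Dm M (h x))"
    by (rule minimal_Dm_in_filt[OF twisted minimal hx mod_map_in_filt[OF h x x_filt]])
  moreover have "in_filt M (p + 1) (n + 1 + -1) (h (Dm M x))"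
    by (rule mod_map_in_filt[OF h cont_lin_tw_el[OF twisted_Dm_cont_lin[OF twisted] x]
          minimal_Dm_in_filt[OF twisted minimal x x_filt]])
  ultimately show ?thesis
    using homotopy[OF x] unfolding in_filt_def by simp
qed

text \<open>Partial sums of the Neumann series of u = id + w: neumann N = \<Sum>k<N. (-w)^k.\<close>
primrec neumann :: "nat \<Rightarrow> ('b \<Rightarrow> 'a) \<Rightarrow> ('b \<Rightarrow> 'a)" where
  "neumann 0 m = (\<lambda>b. 0)"
| "neumann (Suc N) m = (\<lambda>b. m b - w (neumann N m) b)"

text \<open>Unfolding neumann (Suc N) also under w would destroy the matching against
  the linearity of w, so the recursion equation is only used explicitly.\<close>
declare neumann.simps(2) [simp del]

lemma closed0_neumann: "closed0 A M M (neumann N)"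
proof (induction N)
  case 0
  show ?case using closed0_zero[OF twisted] by (simp add: fun_eq_iff)
next
  case (Suc N)
  have "neumann (Suc N) = (\<lambda>m b. m b - (w \<circ> neumann N) m b)"
    by (simp add: fun_eq_iff neumann.simps(2))
  then show ?case
    using closed0_diff[OF twisted closed0_id closed0_comp[OF Suc.IH closed0_w]] by simp
qed

lemma neumann_tw_el: "tw_el A M n m \<Longrightarrow> tw_el A M n (neumann N m)"
  by (rule closed0_tw_el[OF closed0_neumann])

lemma neumann_increment_in_filt:
  "tw_el A M n m \<Longrightarrow> in_filt M (int N) n (\<lambda>b. neumann (Suc N) m b - neumann N m b)"
proof (induction N)
  case 0
  then show ?case
    using tw_el_in_filt_0 unfolding in_filt_def
    by (simp add: neumann.simps(2) cont_lin_zero[OF closed0_cont_lin[OF closed0_w]])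
next
  case (Suc N)
  let ?x1 = "neumann (Suc N) m" and ?x0 = "neumann N m"
  have "(\<lambda>b. neumann (Suc (Suc N)) m b - ?x1 b) = (\<lambda>b. w ?x0 b - w ?x1 b)"
    unfolding neumann.simps(2)[of "Suc N"] neumann.simps(2)[of N] by simp
  also have "\<dots> = (\<lambda>b. - w (\<lambda>b. ?x1 b - ?x0 b) b)"
    using w_diff[OF neumann_tw_el neumann_tw_el, OF Suc.prems Suc.prems, of "Suc N" N] by simp
  finally have step: "neumann (Suc (Suc N)) m b - ?x1 b = - w (\<lambda>b. ?x1 b - ?x0 b) b" for b
    by (rule fun_cong)
  have "in_filt M (int N + 1) n (w (\<lambda>b. ?x1 b - ?x0 b))"
    by (rule w_in_filt[OF tw_el_diff[OF neumann_tw_el neumann_tw_el] Suc.IH, OF Suc.prems Suc.prems Suc.prems])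
  then show ?case
    unfolding in_filt_def step by simp
qed

lemma neumann_stable:
  assumes m: "tw_el A M n m" and b: "n - vdeg M b < int N"
  shows "N \<le> N' \<Longrightarrow> neumann N' m b = neumann N m b"
proof (induction N' rule: dec_induct)
  case (step K)
  then show ?case
    using neumann_increment_in_filt[OF m, of K] b unfolding in_filt_def by fastforce
qed simp

text \<open>The degree of m is not determined by m (think of m = 0), so the index from which the
  partial sums stabilise in the coefficient b is chosen by SOME rather than computed.\<close>
definition neumann_inv :: "('b \<Rightarrow> 'a) \<Rightarrow> ('b \<Rightarrow> 'a)" where
  "neumann_inv m = (\<lambda>b. neumann (SOME N. \<forall>N'\<ge>N. neumann N' m b = neumann N m b) m b)"

lemma neumann_inv_eq:
  assumes m: "tw_el A M n m" and b: "n - vdeg M b < int N"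
  shows "neumann_inv m b = neumann N m b"
proof -
  define K where "K = (SOME K. \<forall>N'\<ge>K. neumann N' m b = neumann K m b)"
  have K: "\<forall>N'\<ge>K. neumann N' m b = neumann K m b"
    unfolding K_def by (rule someI[where x = N]) (use neumann_stable[OF m b] in blast)
  have "neumann_inv m b = neumann K m b"
    unfolding neumann_inv_def K_def ..
  also have "\<dots> = neumann (max K N) m b"
    using K[rule_format, of "max K N"] by simp
  also have "\<dots> = neumann N m b"
    using neumann_stable[OF m b, of "max K N"] by simp
  finally show ?thesis .
qed

lemma neumann_inv_tw_el:
  assumes m: "tw_el A M n m"
  shows "tw_el A M n (neumann_inv m)"
proof -
  have eq: "neumann_inv m b = neumann (Suc (nat (n - vdeg M b))) m b" for b
    by (rule neumann_inv_eq[OF m]) simp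
  have comp: "neumann_inv m b \<in> comp A (n - vdeg M b)" for b
    unfolding eq by (rule tw_el_comp[OF neumann_tw_el[OF m]])
  show ?thesis
  proof (rule tw_elI[OF _ comp])
    show "neumann_inv m b = 0" if "b \<notin> basis M" for b
      unfolding eq by (rule tw_el_outside[OF neumann_tw_el[OF m] that])
    fix I assume I: "I \<in> opens A"
    obtain N where N: "\<forall>j \<ge> int N. comp A j \<subseteq> I"
      using open_contains_high_comps[OF I] by blast
    have "neumann_inv m b \<in> I" if "neumann N m b \<in> I" for b
    proof (cases "n - vdeg M b < int N")
      case True
      then show ?thesis using neumann_inv_eq[OF m True] that by simp
    next
      case False
      then show ?thesis using N[rule_format, of "n - vdeg M b"] comp[of b] by auto
    qed
    then have "{b\<in>basis M. neumann_inv m b \<notin> I} \<subseteq> {b\<in>basis M. neumann N m b \<notin> I}"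
      by blast
    then show "finite {b\<in>basis M. neumann_inv m b \<notin> I}"
      using finite_subset tw_el_finite[OF neumann_tw_el[OF m] I] by blast
  qed
qed

lemma cont_lin_neumann_inv:
  assumes f: "cont_lin A M M p f" and m: "tw_el A M n m"
    and preserves: "\<And>d. tw_el A M n d \<Longrightarrow> in_filt M (int N) n d \<Longrightarrow> in_filt M (int N) (n + p) (f d)"
    and b: "n + p - vdeg M b < int N"
  shows "f (neumann_inv m) b = f (neumann N m) b"
proof -
  let ?d = "\<lambda>b. neumann_inv m b - neumann N m b"
  have d: "tw_el A M n ?d"
    by (rule tw_el_diff[OF neumann_inv_tw_el[OF m] neumann_tw_el[OF m]])
  have "in_filt M (int N) n ?d"
    unfolding in_filt_def by (simp add: neumann_inv_eq[OF m, of _ N])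
  then have "f ?d b = 0"
    using preserves[OF d] b unfolding in_filt_def by blast
  moreover have "f (neumann_inv m) = f (\<lambda>b. neumann N m b + ?d b)"
    by simp
  moreover have "\<dots> = (\<lambda>x. f (neumann N m) x + f ?d x)"
    by (rule cont_lin_add[OF f neumann_tw_el[OF m] d])
  ultimately show ?thesis by simp
qed

lemma neumann_u: "tw_el A M n m \<Longrightarrow> neumann N (u m) = u (neumann N m)"
proof (induction N)
  case 0
  then show ?case using cont_lin_zero[OF closed0_cont_lin[OF closed]] by simp
next
  case (Suc N)
  have "neumann (Suc N) (u m) = (\<lambda>b. u m b - w (u (neumann N m)) b)"
    using Suc by (simp add: neumann.simps(2))
  also have "\<dots> = (\<lambda>b. u m b - u (w (neumann N m)) b)"
    using w_u[OF neumann_tw_el[OF Suc.prems]] by simp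
  also have "\<dots> = u (neumann (Suc N) m)"
    using cont_lin_diff[OF closed0_cont_lin[OF closed] Suc.prems closed0_tw_el[OF closed0_w neumann_tw_el[OF Suc.prems]]]
    by (simp add: neumann.simps(2))
  finally show ?case .
qed

lemma u_neumann: "u (neumann N m) b = m b - (neumann (Suc N) m b - neumann N m b)"
  unfolding neumann.simps(2) w_def by (simp add: algebra_simps)

lemma neumann_inv_u: "tw_el A M n m \<Longrightarrow> neumann_inv (u m) = m"
proof
  fix b assume m: "tw_el A M n m"
  let ?N = "Suc (nat (n - vdeg M b))"
  have N: "n - vdeg M b < int ?N" by simp
  have "neumann_inv (u m) b = u (neumann ?N m) b"
    using neumann_inv_eq[OF closed0_tw_el[OF closed m] N] neumann_u[OF m] by simp
  also have "\<dots> = m b"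
    unfolding u_neumann using neumann_stable[OF m N, of "Suc ?N"] by simp
  finally show "neumann_inv (u m) b = m b" .
qed

lemma u_neumann_inv: "tw_el A M n m \<Longrightarrow> u (neumann_inv m) = m"
proof
  fix b assume m: "tw_el A M n m"
  let ?N = "Suc (nat (n - vdeg M b))"
  have N: "n - vdeg M b < int ?N" by simp
  have "u (neumann_inv m) b = u (neumann ?N m) b"
    using cont_lin_neumann_inv[OF closed0_cont_lin[OF closed] m _ , of ?N b]
      mod_map_in_filt[OF closed0_mod_map[OF closed]] N by simp
  also have "\<dots> = m b"
    unfolding u_neumann using neumann_stable[OF m N, of "Suc ?N"] by simp
  finally show "u (neumann_inv m) b = m b" .
qed

lemma closed0_neumann_inv: "closed0 A M M neumann_inv"
  unfolding closed0_def mod_map_def cont_lin_def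
proof (intro conjI allI impI ballI)
  fix n m assume m: "tw_el A M n m"
  show "tw_el A M (n + 0) (neumann_inv m)"
    using neumann_inv_tw_el[OF m] by simp
  have Dm: "cont_lin A M M 1 (Dm M)"
    by (rule twisted_Dm_cont_lin[OF twisted])
  show "Dm M (neumann_inv m) = neumann_inv (Dm M m)"
  proof
    fix b
    let ?N = "Suc (nat (n + 1 - vdeg M b))"
    have N: "n + 1 - vdeg M b < int ?N" by simp
    have "in_filt M (int ?N) (n + 1) (Dm M d)" if "tw_el A M n d" "in_filt M (int ?N) n d" for d
      using minimal_Dm_in_filt[OF twisted minimal that] unfolding in_filt_def by simp
    then have "Dm M (neumann_inv m) b = Dm M (neumann ?N m) b"
      by (rule cont_lin_neumann_inv[OF Dm m _ N])
    also have "\<dots> = neumann ?N (Dm M m) b"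
      using closed0_Dm[OF closed0_neumann m] by simp
    also have "\<dots> = neumann_inv (Dm M m) b"
      using neumann_inv_eq[OF cont_lin_tw_el[OF Dm m] N] by simp
    finally show "Dm M (neumann_inv m) b = neumann_inv (Dm M m) b" .
  qed
  fix c
  show "neumann_inv (\<lambda>b. sm A c (m b)) = (\<lambda>x. sm A c (neumann_inv m x))"
  proof
    fix b
    have N: "n - vdeg M b < int (Suc (nat (n - vdeg M b)))" by simp
    show "neumann_inv (\<lambda>b. sm A c (m b)) b = sm A c (neumann_inv m b)"
      unfolding neumann_inv_eq[OF m N] neumann_inv_eq[OF tw_el_sm[OF m] N]
      using cont_lin_sm[OF closed0_cont_lin[OF closed0_neumann] m] by simp
  qed
next
  fix n m m' assume m: "tw_el A M n m" and m': "tw_el A M n m'"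
  show "neumann_inv (\<lambda>b. m b + m' b) = (\<lambda>x. neumann_inv m x + neumann_inv m' x)"
  proof
    fix b
    have N: "n - vdeg M b < int (Suc (nat (n - vdeg M b)))" by simp
    show "neumann_inv (\<lambda>b. m b + m' b) b = neumann_inv m b + neumann_inv m' b"
      unfolding neumann_inv_eq[OF m N] neumann_inv_eq[OF m' N] neumann_inv_eq[OF tw_el_add[OF m m'] N]
      using cont_lin_add[OF closed0_cont_lin[OF closed0_neumann] m m'] by simp
  qed
next
  fix n q m a assume m: "tw_el A M n m" and a: "a \<in> comp A q"
  show "neumann_inv (\<lambda>b. m b * a) = (\<lambda>x. neumann_inv m x * a)"
  proof
    fix b
    let ?N = "Suc (nat (max (n + q - vdeg M b) (n - vdeg M b)))"
    have N: "n + q - vdeg M b < int ?N" "n - vdeg M b < int ?N" by linarith+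
    show "neumann_inv (\<lambda>b. m b * a) b = neumann_inv m b * a"
      unfolding neumann_inv_eq[OF tw_el_mult[OF m a] N(1)] neumann_inv_eq[OF m N(2)]
      using mod_map_mult[OF closed0_mod_map[OF closed0_neumann] m a] by simp
  qed
next
  fix n I assume I: "I \<in> opens A"
  obtain N where N: "\<forall>j \<ge> int N. comp A j \<subseteq> I"
    using open_contains_high_comps[OF I] by blast
  obtain J where J: "J \<in> opens A" "\<forall>m. tw_el A M n m \<longrightarrow> (\<forall>b. m b \<in> J) \<longrightarrow> (\<forall>x. neumann N m x \<in> I)"
    using cont_lin_cont[OF closed0_cont_lin[OF closed0_neumann] I] by blast
  have "neumann_inv m x \<in> I" if m: "tw_el A M n m" and "\<forall>b. m b \<in> J" for m x
  proof (cases "n - vdeg M x < int N")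
    case True
    then show ?thesis using neumann_inv_eq[OF m True] J(2) that by simp
  next
    case False
    then show ?thesis using N[rule_format, of "n - vdeg M x"] tw_el_comp[OF neumann_inv_tw_el[OF m], of x] by auto
  qed
  then show "\<exists>J\<in>opens A. \<forall>m. tw_el A M n m \<longrightarrow> (\<forall>b. m b \<in> J) \<longrightarrow> (\<forall>x. neumann_inv m x \<in> I)"
    using J(1) by blast
qed

lemma closed0_inverse:
  "\<exists>v. closed0 A M M v \<and> (\<forall>n m. tw_el A M n m \<longrightarrow> v (u m) = m \<and> u (v m) = m)"
  using closed0_neumann_inv neumann_inv_u u_neumann_inv by blast

end

theorem proposition6p6:
  fixes A :: "('k::comm_ring_1, 'a::ring_1) dga"
    and M :: "('b, 'a) twmod" and N :: "('c, 'a) twmod"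
    and f :: "('b \<Rightarrow> 'a) \<Rightarrow> ('c \<Rightarrow> 'a)"
  assumes "is_dga A" and "nonneg_graded A" and "pseudo_compact A"
    and "is_twisted A M" and "is_twisted A N"
    and "minimal M" and "minimal N"
    and "homotopy_equiv A M N f"
  shows "is_iso A M N f"
proof -
  interpret nonneg_pc_dga A
    using assms(1-3) by unfold_locales
  obtain g where f: "closed0 A M N f" and g: "closed0 A N M g"
    and gf: "coh_id A M (g \<circ> f)" and fg: "coh_id A N (f \<circ> g)"
    using assms(8) unfolding homotopy_equiv_def by blast
  interpret gf: cohomologous_to_id A M "g \<circ> f"
    using assms(4,6) closed0_comp[OF f g] gf by unfold_locales
  interpret fg: cohomologous_to_id A N "f \<circ> g"
    using assms(5,7) closed0_comp[OF g f] fg by unfold_locales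
  obtain v where v: "closed0 A M M v" and v_left: "\<And>n m. tw_el A M n m \<Longrightarrow> v (g (f m)) = m"
    using gf.closed0_inverse by auto
  obtain v' where v': "closed0 A N N v'" and v'_right: "\<And>n m. tw_el A N n m \<Longrightarrow> f (g (v' m)) = m"
    using fg.closed0_inverse by auto
  have "f (v (g m)) = m" if m: "tw_el A N n m" for n m
    using v_left[OF closed0_tw_el[OF g closed0_tw_el[OF v' m]]] v'_right[OF m] by simp
  then show ?thesis
    unfolding is_iso_def using f closed0_comp[OF g v] v_left by auto
qed

end
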